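(* Let $k\ge 3$ be an integer such that every set of $k-1$ distinct positive integers has the LR property. Let $p$ be a positive integer with the following property: for all $v_1,\ldots,v_k\in\{0,1,\ldots,(k+1)p-1\}$ such that (i) for every subset $S\subseteq\{v_1,\ldots,v_k\}$ of size $k-1$ we have $\gcd(S\cup\{(k+1)p\})=1$, and (ii) no $v_i$ is divisible by $p$, there exists $t\in\{0,1,\ldots,(k+1)p-1\}$ such that $\left\|\frac{t v_i}{(k+1)p}\right\|\ge\frac{1}{k+1}$ for all $i$. Then for every set $\{v_1,\ldots,v_k\}$ of $k$ distinct integers that does not have the LR property, $p$ divides $\prod_{i=1}^k v_i$.
   Context: For a real number $x$, $\|x\|$ denotes the distance from $x$ to the nearest integer. A finite set $S$ of $m$ integers has the LR (lonely runner) property if there exists a real $t$ such that $\|tv\|\ge \frac{1}{m+1}$ for all $v\in S$. The hypothesis "every set of $k-1$ distinct positive integers has the LR property" is what the paper calls "the lonely runner conjecture holds for $k-1$". *)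

theory Defs
  imports Complex_Main
begin

definition dist_int :: "real \<Rightarrow> real" where
  "dist_int x = \<bar>x - of_int (round x)\<bar>"

definition LR_property :: "int set \<Rightarrow> bool" where
  "LR_property S \<longleftrightarrow>
     (\<exists>t::real. \<forall>v\<in>S. dist_int (t * of_int v) \<ge> 1 / (real (card S) + 1))"

end

theory Submission
  imports Defs
begin

text \<open>Only the absolute values matter, and if they take fewer than k values the conjecture
  for k - 1 runners already applies; scaling preserves the LR property, so we may assume that
  V consists of k positive integers with Gcd V = 1. If some q \<ge> 2 divides every element
  of V except j, then q is coprime to j: the lonely runner conjecture for the k - 1 quotients
  v / q gives a time t, and t' = (t + a) / q keeps those runners at distance \<ge> 1/k, while a
  suitable a (a Bezout multiple) moves runner j to distance \<ge> 1/4. Otherwise any k - 1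
  elements of V are coprime, which survives reduction modulo n = (k+1)p together with n
  itself; when p divides no element, the hypothesis on p then yields t for which t / n is a
  good time for V, since t v / n and t (v mod n) / n differ by an integer.\<close>

definition lonely_runner_holds :: "nat \<Rightarrow> bool" where
  "lonely_runner_holds m \<longleftrightarrow>
     (\<forall>S. finite S \<longrightarrow> card S = m \<longrightarrow> S \<subseteq> {x. x > 0} \<longrightarrow> LR_property S)"

definition residue_LR_property :: "nat \<Rightarrow> int \<Rightarrow> bool" where
  "residue_LR_property k p \<longleftrightarrow>
     (\<forall>v :: nat \<Rightarrow> int.
        (\<forall>i\<in>{1..k}. v i \<in> {0..(int k + 1) * p - 1}) \<longrightarrow>
        (\<forall>j\<in>{1..k}. Gcd (insert ((int k + 1) * p) (v ` ({1..k} - {j}))) = 1) \<longrightarrow>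
        (\<forall>i\<in>{1..k}. \<not> p dvd v i) \<longrightarrow>
        (\<exists>t\<in>{0..(int k + 1) * p - 1}. \<forall>i\<in>{1..k}.
           dist_int (of_int (t * v i) / of_int ((int k + 1) * p)) \<ge> 1 / (real k + 1)))"

lemma dist_int_le: "dist_int x \<le> \<bar>x - of_int m\<bar>"
  unfolding dist_int_def by (rule round_diff_minimal)

lemma dist_int_add_of_int [simp]: "dist_int (x + of_int n) = dist_int x"
proof (rule antisym)
  show "dist_int (x + of_int n) \<le> dist_int x"
    using dist_int_le[of "x + of_int n" "round x + n"] by (simp add: dist_int_def)
  show "dist_int x \<le> dist_int (x + of_int n)"
    using dist_int_le[of x "round (x + of_int n) - n"] by (simp add: dist_int_def algebra_simps)
qed

lemma dist_int_minus [simp]: "dist_int (- x) = dist_int x"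
proof (rule antisym)
  show "dist_int (- x) \<le> dist_int x"
    using dist_int_le[of "- x" "- round x"] by (simp add: dist_int_def abs_minus_commute)
  show "dist_int x \<le> dist_int (- x)"
    using dist_int_le[of x "- round (- x)"] by (simp add: dist_int_def abs_minus_commute)
qed

lemma dist_int_mult_abs: "dist_int (t * of_int \<bar>v\<bar>) = dist_int (t * of_int v)"
  by (cases "v \<ge> 0") simp_all

lemma dist_int_ge_quarter:
  assumes "1/4 \<le> x - of_int m" and "x - of_int m \<le> 3/4"
  shows "1/4 \<le> dist_int x"
proof (cases "round x \<le> m")
  case True
  then have "real_of_int (round x) \<le> of_int m" by simp
  with assms show ?thesis unfolding dist_int_def by linarith
next
  case False
  then have "real_of_int (round x) \<ge> of_int m + 1" by linarith
  with assms show ?thesis unfolding dist_int_def by linarith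
qed

lemma exists_dist_int_add_divide_ge_quarter:
  fixes x :: real and q :: int
  assumes "q \<ge> 2"
  shows "\<exists>b::int. 1/4 \<le> dist_int (x + of_int b / of_int q)"
proof -
  define y where "y = 1/4 - (x - of_int \<lfloor>x\<rfloor>)"
  define b where "b = \<lceil>y * of_int q\<rceil>"
  have q: "real_of_int q \<ge> 2" using assms by simp
  have "y \<le> of_int b / of_int q" "of_int b / of_int q < y + 1 / of_int q"
    using q by (simp_all add: b_def field_simps) linarith+
  moreover have "1 / real_of_int q \<le> 1/2" using q by simp
  ultimately have "1/4 \<le> x + of_int b / of_int q - of_int \<lfloor>x\<rfloor>"
    and "x + of_int b / of_int q - of_int \<lfloor>x\<rfloor> \<le> 3/4"
    unfolding y_def by linarith+
  then show ?thesis by (blast intro: dist_int_ge_quarter)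
qed

lemma LR_propertyI:
  assumes "\<forall>v\<in>V. c \<le> dist_int (t * of_int v)" and "1 / (real (card V) + 1) \<le> c"
  shows "LR_property V"
  using assms unfolding LR_property_def by (meson order_trans)

lemma LR_property_image_mult:
  assumes "LR_property S" and "q \<noteq> 0"
  shows "LR_property ((*) q ` S)"
proof -
  obtain t where t: "\<forall>s\<in>S. 1 / (real (card S) + 1) \<le> dist_int (t * of_int s)"
    using assms(1) unfolding LR_property_def by blast
  have "card ((*) q ` S) = card S"
    using assms(2) by (simp add: card_image inj_on_def)
  moreover have "\<forall>v\<in>(*) q ` S. 1 / (real (card S) + 1) \<le> dist_int (t / of_int q * of_int v)"
    using t assms(2) by auto
  ultimately show ?thesis by (intro LR_propertyI[where t = "t / of_int q"]) auto
qed

lemma lonely_runner_holds_card_le: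
  assumes "lonely_runner_holds m" and "finite S" and "S \<subseteq> {x. x > 0}" and "card S \<le> m"
  shows "\<exists>t. \<forall>s\<in>S. 1 / (real m + 1) \<le> dist_int (t * of_int s)"
proof -
  have "infinite ({0::int<..} - S)"
    using assms(2) by (simp add: Diff_infinite_finite infinite_Ioi)
  then obtain B where B: "B \<subseteq> {0<..} - S" "finite B" "card B = m - card S"
    by (meson infinite_arbitrarily_large)
  have card: "card (S \<union> B) = m"
    using B assms(2,4) by (subst card_Un_disjoint) auto
  then have "LR_property (S \<union> B)"
    using assms B unfolding lonely_runner_holds_def by auto
  then show ?thesis unfolding LR_property_def card by auto
qed

lemma exists_time_insert_coprime:
  fixes q j :: int and W :: "int set"
  assumes q: "q \<ge> 2" and cop: "coprime q j" and dvd: "\<forall>v\<in>W. q dvd v"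
    and t: "\<forall>v\<in>W. c \<le> dist_int (t * of_int (v div q))"
  shows "\<exists>t'. 1/4 \<le> dist_int (t' * of_int j) \<and> (\<forall>v\<in>W. c \<le> dist_int (t' * of_int v))"
proof -
  obtain b :: int where b: "1/4 \<le> dist_int (t * of_int j / of_int q + of_int b / of_int q)"
    using exists_dist_int_add_divide_ge_quarter[OF q] by blast
  obtain a r :: int where aj: "a * j = b + q * r"
  proof -
    obtain u w :: int where "u * j + w * q = 1"
      using bezout_int[of j q] cop by (auto simp: coprime_iff_gcd_eq_1 gcd.commute)
    then have "(u * b) * j = b + q * (- w * b)" by algebra
    then show ?thesis by (rule that)
  qed
  define t' where "t' = (t + of_int a) / of_int q"
  have "t' * of_int j = t * of_int j / of_int q + of_int b / of_int q + of_int r"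
  proof -
    have "real_of_int a * of_int j = of_int b + of_int q * of_int r"
      by (metis aj of_int_add of_int_mult)
    then show ?thesis unfolding t'_def using q by (simp add: field_simps)
  qed
  with b have "1/4 \<le> dist_int (t' * of_int j)" by (simp only: dist_int_add_of_int)
  moreover have "c \<le> dist_int (t' * of_int v)" if v: "v \<in> W" for v
  proof -
    have "real_of_int v = of_int q * of_int (v div q)"
      using dvd v by (metis dvd_mult_div_cancel of_int_mult)
    then have "t' * of_int v = t * of_int (v div q) + of_int (a * (v div q))"
      unfolding t'_def using q by (simp add: field_simps)
    then show ?thesis using t v by (simp only: dist_int_add_of_int)
  qed
  ultimately show ?thesis by blast
qed

lemma LR_property_if_Gcd_remove_ne_1:
  assumes k: "k \<ge> 3" and lr: "lonely_runner_holds (k - 1)"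
    and fin: "finite V" and cV: "card V = k" and pos: "V \<subseteq> {x. x > 0}"
    and G: "Gcd V = 1" and j: "j \<in> V" and Gj: "Gcd (V - {j}) \<noteq> 1"
  shows "LR_property V"
proof -
  define q where "q = Gcd (V - {j})"
  have card_rem: "card (V - {j}) = k - 1" using fin j cV by simp
  then have "V - {j} \<noteq> {}" using k by (intro notI) simp
  then have "q \<noteq> 0" using pos unfolding q_def by auto
  moreover have "q \<ge> 0" unfolding q_def by simp
  ultimately have q2: "q \<ge> 2" using Gj unfolding q_def by linarith
  have dvd: "\<forall>v\<in>V - {j}. q dvd v" unfolding q_def by simp
  have "gcd q j dvd Gcd V"
    using dvd j by (auto intro!: Gcd_greatest intro: dvd_trans)
  then have cop: "coprime q j" using G by (simp add: coprime_iff_gcd_eq_1)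
  define S where "S = (\<lambda>v. v div q) ` (V - {j})"
  have "finite S" unfolding S_def using fin by simp
  moreover have "S \<subseteq> {x. x > 0}"
    using pos dvd q2 by (auto simp: S_def pos_imp_zdiv_pos_iff zdvd_imp_le)
  moreover have "card S \<le> k - 1"
    unfolding S_def using card_image_le[of "V - {j}"] fin card_rem by simp
  ultimately obtain t where "\<forall>s\<in>S. 1 / (real (k - 1) + 1) \<le> dist_int (t * of_int s)"
    using lonely_runner_holds_card_le[OF lr] by blast
  then have "\<forall>v\<in>V - {j}. 1 / real k \<le> dist_int (t * of_int (v div q))"
    using k by (simp add: S_def of_nat_diff)
  then obtain t' where t': "1/4 \<le> dist_int (t' * of_int j)"
      "\<forall>v\<in>V - {j}. 1 / real k \<le> dist_int (t' * of_int v)"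
    using exists_time_insert_coprime[OF q2 cop dvd] by blast
  have quarter: "1 / (real k + 1) \<le> 1/4" and inv_k: "1 / (real k + 1) \<le> 1 / real k"
    using k by (simp_all add: field_simps)
  have "1 / (real k + 1) \<le> dist_int (t' * of_int v)" if v: "v \<in> V" for v
  proof (cases "v = j")
    case True
    then show ?thesis using order_trans[OF quarter t'(1)] by simp
  next
    case False
    then have "1 / real k \<le> dist_int (t' * of_int v)" using t'(2) v by blast
    then show ?thesis using inv_k by linarith
  qed
  then show ?thesis using LR_propertyI[of V "1 / (real k + 1)" t'] cV by simp
qed

lemma LR_property_if_residue_LR_property:
  assumes res: "residue_LR_property k p" and p: "p > 0"
    and fin: "finite V" and cV: "card V = k"
    and Gcd_rem: "\<forall>j\<in>V. Gcd (V - {j}) = 1" and ndvd: "\<forall>v\<in>V. \<not> p dvd v"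
  shows "LR_property V"
proof -
  define n where "n = (int k + 1) * p"
  have n: "n > 0" and pn: "p dvd n" using p unfolding n_def by simp_all
  obtain h where h: "bij_betw h {1..k} V"
    using ex_bij_betw_nat_finite_1[OF fin] cV by auto
  then have hV: "h i \<in> V" if "i \<in> {1..k}" for i
    using that by (meson bij_betwE)
  define w where "w i = h i mod n" for i
  have hw: "h i = n * (h i div n) + w i" for i
    unfolding w_def by simp
  have "\<forall>i\<in>{1..k}. w i \<in> {0..n - 1}"
    using n by (simp add: w_def)
  moreover have "\<forall>i\<in>{1..k}. \<not> p dvd w i"
    using ndvd hV pn hw by (metis dvd_add dvd_mult2)
  moreover have "Gcd (insert n (w ` ({1..k} - {j}))) = 1" if j: "j \<in> {1..k}" for j
  proof -
    let ?G = "Gcd (insert n (w ` ({1..k} - {j})))"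
    have "h ` ({1..k} - {j}) = V - {h j}"
      using inj_on_image_set_diff[of h "{1..k}" "{1..k}" "{j}"] h j by (simp add: bij_betw_def)
    moreover have "?G dvd Gcd (h ` ({1..k} - {j}))"
    proof (rule Gcd_greatest)
      fix v assume "v \<in> h ` ({1..k} - {j})"
      then obtain i where "i \<in> {1..k} - {j}" "v = h i" by blast
      then have "?G dvd n" "?G dvd w i" by (blast intro: Gcd_dvd)+
      then show "?G dvd v" using hw \<open>v = h i\<close> by (metis dvd_add dvd_mult2)
    qed
    ultimately have "?G dvd 1" using Gcd_rem hV[OF j] by simp
    then show ?thesis by simp
  qed
  ultimately obtain t where t: "\<forall>i\<in>{1..k}. 1 / (real k + 1) \<le> dist_int (of_int (t * w i) / of_int n)"
    using res unfolding residue_LR_property_def n_def by blast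
  have "1 / (real k + 1) \<le> dist_int (real_of_int t / of_int n * of_int v)" if "v \<in> V" for v
  proof -
    obtain i where i: "i \<in> {1..k}" "v = h i"
      using h \<open>v \<in> V\<close> by (metis bij_betw_imp_surj_on imageE)
    have "real_of_int v = of_int n * of_int (h i div n) + of_int (w i)"
      using hw[of i] i(2) by (metis of_int_add of_int_mult)
    then have "real_of_int t / of_int n * of_int v = of_int (t * w i) / of_int n + of_int (t * (h i div n))"
      using n by (simp add: field_simps)
    then show ?thesis using t i(1) by (simp only: dist_int_add_of_int)
  qed
  then show ?thesis using LR_propertyI[of V _ "real_of_int t / of_int n"] cV by blast
qed

lemma LR_property_if_pos_not_dvd:
  assumes k: "k \<ge> 3" and lr: "lonely_runner_holds (k - 1)"
    and res: "residue_LR_property k p" and p: "p > 0"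
    and fin: "finite V" and cV: "card V = k" and pos: "V \<subseteq> {x. x > 0}"
    and ndvd: "\<forall>v\<in>V. \<not> p dvd v"
  shows "LR_property V"
proof -
  define g where "g = Gcd V"
  have "V \<noteq> {}" using cV k by auto
  then have "g \<noteq> 0" using pos unfolding g_def by auto
  then have g: "g > 0" unfolding g_def by (simp add: order_less_le)
  define U where "U = (\<lambda>v. v div g) ` V"
  have "g * (v div g) = v" if "v \<in> V" for v
    using that by (simp add: g_def Gcd_dvd)
  then have V_eq: "V = (*) g ` U"
    unfolding U_def image_image by simp
  have finU: "finite U" unfolding U_def using fin by simp
  have "inj_on ((*) g) U" using g by (auto simp: inj_on_def)
  then have cU: "card U = k" using cV V_eq by (simp add: card_image)
  have posU: "U \<subseteq> {x. x > 0}"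
    using pos g by (auto simp: V_eq zero_less_mult_iff)
  have "normalize (g * Gcd U) = g"
    using Gcd_mult[of g U] by (metis V_eq g_def)
  then have GU: "Gcd U = 1" using g by (simp add: abs_mult)
  have ndvdU: "\<forall>u\<in>U. \<not> p dvd u"
    using ndvd by (auto simp: V_eq)
  have "LR_property U"
  proof (cases "\<exists>j\<in>U. Gcd (U - {j}) \<noteq> 1")
    case True
    then show ?thesis using LR_property_if_Gcd_remove_ne_1[OF k lr finU cU posU GU] by blast
  next
    case False
    then show ?thesis using LR_property_if_residue_LR_property[OF res p finU cU _ ndvdU] by blast
  qed
  then show ?thesis using g by (simp add: V_eq LR_property_image_mult)
qed

lemma LR_property_if_not_dvd_prod:
  assumes k: "k \<ge> 3" and lr: "lonely_runner_holds (k - 1)"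
    and res: "residue_LR_property k p" and p: "p > 0"
    and fin: "finite V" and cV: "card V = k" and ndvd_prod: "\<not> p dvd \<Prod>V"
  shows "LR_property V"
proof -
  have ndvd: "\<forall>v\<in>V. \<not> p dvd v" using fin ndvd_prod by (meson dvd_prodI dvd_trans)
  define A where "A = abs ` V"
  have finA: "finite A" and posA: "A \<subseteq> {x. x > 0}" and ndvdA: "\<forall>a\<in>A. \<not> p dvd a"
    using fin ndvd by (auto simp: A_def)
  obtain t where t: "\<forall>a\<in>A. 1 / (real k + 1) \<le> dist_int (t * of_int a)"
  proof (cases "card A = k")
    case True
    then have "LR_property A" using LR_property_if_pos_not_dvd[OF k lr res p finA _ posA ndvdA] by blast
    then show ?thesis using that True unfolding LR_property_def by blast
  next
    case False
    then have "card A \<le> k - 1" using card_image_le[OF fin, of abs] cV by (simp add: A_def)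
    then obtain t where "\<forall>a\<in>A. 1 / (real (k - 1) + 1) \<le> dist_int (t * of_int a)"
      using lonely_runner_holds_card_le[OF lr finA posA] by blast
    moreover have "1 / (real k + 1) \<le> 1 / (real (k - 1) + 1)" using k by (simp add: field_simps)
    ultimately show ?thesis using that by (meson order_trans)
  qed
  then have "\<forall>v\<in>V. 1 / (real k + 1) \<le> dist_int (t * of_int v)"
    by (simp add: A_def dist_int_mult_abs del: of_int_abs)
  then show ?thesis using LR_propertyI[of V _ t] cV by blast
qed

theorem lemma5:
  fixes k :: nat and p :: int
  assumes k3: "k \<ge> 3"
    and LRC: "\<And>S. finite S \<Longrightarrow> card S = k - 1 \<Longrightarrow> S \<subseteq> {x. x > 0} \<Longrightarrow> LR_property S"
    and ppos: "p > 0"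
    and pprop: "\<And>v :: nat \<Rightarrow> int.
        (\<forall>i\<in>{1..k}. v i \<in> {0..(int k + 1) * p - 1}) \<Longrightarrow>
        (\<forall>j\<in>{1..k}. Gcd (insert ((int k + 1) * p) (v ` ({1..k} - {j}))) = 1) \<Longrightarrow>
        (\<forall>i\<in>{1..k}. \<not> p dvd v i) \<Longrightarrow>
        \<exists>t\<in>{0..(int k + 1) * p - 1}. \<forall>i\<in>{1..k}.
           dist_int (of_int (t * v i) / of_int ((int k + 1) * p)) \<ge> 1 / (real k + 1)"
  shows "\<And>V :: int set. finite V \<Longrightarrow> card V = k \<Longrightarrow> \<not> LR_property V \<Longrightarrow> p dvd (\<Prod>V)"
proof -
  have lr: "lonely_runner_holds (k - 1)" using LRC unfolding lonely_runner_holds_def by blast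
  have res: "residue_LR_property k p" using pprop unfolding residue_LR_property_def by blast
  show "\<And>V. finite V \<Longrightarrow> card V = k \<Longrightarrow> \<not> LR_property V \<Longrightarrow> p dvd \<Prod>V"
    using LR_property_if_not_dvd_prod[OF k3 lr res ppos] by blast
qed

end
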